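(* Let $p\in(p_0,1/2)$ and $a\in(0,0.01)$ be constants, where $p_0$ is the real root of $4x^3-7x^2+5x-1$, and let $k$ be such that $ak$ is an even integer. For $K\subseteq[n]$ with $|K|=k$ let $M_K$ be the event that the subgraph of $G_{n,p}$ induced on $K$ belongs to $\mathcal{F}_k$ (for some choice of partitions). Then for every integer $i\le(1-10a)k$ and all $K,K'\in\binom{[n]}{k}$ with $|K\cap K'|=i$, $$\mathbb{P}[M_K\cap M_{K'}]\le(1-p)^{-(0.5-2a)ki}\,\big(\mathbb{P}[M_K]\big)^2.$$
   Context: A graph $F$ on a $k$-set $K$ is in $\mathcal{F}'_k$ if there are partitions $K=A\cup B$ and $A=A_1\cup\dots\cup A_r$ with $|A|=ak$, $|B|=(1-a)k$, $r=ak/2$, $|A_i|=2$, such that (1) $F$ is bipartite with parts $A$ and $B$, and (2) for every $i$ and every $\beta\in B$, $\beta$ is adjacent either to both vertices of $A_i$ or to neither. $F$ is in $\mathcal{F}_k$ if additionally, for such partitions, (3) every vertex of $A$ has degree at least $0.15k$, and (4) for all $i\ne j$ the symmetric difference of the neighborhoods of $A_i$ and $A_j$ has size at least $0.25k$. *)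

theory Defs
  imports Complex_Main
begin

text \<open>Graphs on the vertex set [n] = {0..<n} are represented by their edge sets,
  edges being 2-element sets of vertices.\<close>

definition all_edges :: "nat \<Rightarrow> nat set set" where
  "all_edges n = {e. \<exists>x y. x < n \<and> y < n \<and> x \<noteq> y \<and> e = {x, y}}"

definition gnp_prob :: "nat \<Rightarrow> real \<Rightarrow> (nat set set \<Rightarrow> bool) \<Rightarrow> real" where
  "gnp_prob n p Ev =
     (\<Sum>E \<in> {E. E \<subseteq> all_edges n \<and> Ev E}.
        p ^ card E * (1 - p) ^ (card (all_edges n) - card E))"

definition nbhd :: "nat set set \<Rightarrow> nat set \<Rightarrow> nat set \<Rightarrow> nat set" where
  "nbhd E K S = {u \<in> K. \<exists>v \<in> S. {u, v} \<in> E \<and> u \<noteq> v}"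

text \<open>The partition of A into pairs is represented by the set P of its blocks.\<close>

definition in_F :: "real \<Rightarrow> nat \<Rightarrow> nat set set \<Rightarrow> nat set \<Rightarrow> bool" where
  "in_F a k E K \<longleftrightarrow>
     (\<exists>A P. A \<subseteq> K \<and> real (card A) = a * real k \<and>
        real (card (K - A)) = (1 - a) * real k \<and>
        real (card P) = a * real k / 2 \<and>
        (\<forall>S \<in> P. S \<subseteq> A \<and> card S = 2) \<and> \<Union>P = A \<and>
        (\<forall>S \<in> P. \<forall>T \<in> P. S \<noteq> T \<longrightarrow> S \<inter> T = {}) \<and>
        \<comment> \<open>(1) bipartite with parts A and B = K - A\<close>
        (\<forall>x \<in> K. \<forall>y \<in> K. {x, y} \<in> E \<and> x \<noteq> y \<longrightarrow>
            (x \<in> A \<and> y \<in> K - A) \<or> (x \<in> K - A \<and> y \<in> A)) \<and>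
        \<comment> \<open>(2) each vertex of B sees both or neither vertex of each pair\<close>
        (\<forall>S \<in> P. \<forall>\<beta> \<in> K - A. (\<forall>x \<in> S. {x, \<beta>} \<in> E) \<or> (\<forall>x \<in> S. {x, \<beta>} \<notin> E)) \<and>
        \<comment> \<open>(3) minimum degree on A\<close>
        (\<forall>v \<in> A. real (card (nbhd E K {v})) \<ge> 0.15 * real k) \<and>
        \<comment> \<open>(4) neighbourhoods of distinct pairs differ a lot\<close>
        (\<forall>S \<in> P. \<forall>T \<in> P. S \<noteq> T \<longrightarrow>
            real (card ((nbhd E K S - nbhd E K T) \<union> (nbhd E K T - nbhd E K S))) \<ge> 0.25 * real k))"

end

theory Submission
  imports Defs
begin

text \<open>
  Split the edges inside \<open>K \<union> K'\<close> into those inside \<open>I = K \<inter> K'\<close> and those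
  inside only one of \<open>K\<close>, \<open>K'\<close>. Given the trace \<open>y\<close> of the random graph on
  \<open>I\<close>, the events \<open>M\<^sub>K\<close> and \<open>M\<^sub>K\<^sub>'\<close> are independent, so
  \<open>P[M\<^sub>K \<inter> M\<^sub>K\<^sub>'] = \<Sum>\<^sub>y P(y) f(y) g(y)\<close>, while
  \<open>P[M\<^sub>K] = \<Sum>\<^sub>y P(y) f(y) = \<Sum>\<^sub>y P(y) g(y)\<close> by symmetry. For a maximiser
  \<open>y\<^sub>0\<close> of \<open>g\<close> this gives \<open>P(y\<^sub>0) P[M\<^sub>K \<inter> M\<^sub>K\<^sub>'] \<le> P[M\<^sub>K]\<^sup>2\<close>.
  If \<open>g(y\<^sub>0) \<noteq> 0\<close>, then \<open>y\<^sub>0\<close> is the trace of a graph in \<open>F\<^sub>k\<close>, which is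
  bipartite with one side of size \<open>ak\<close>; so \<open>y\<^sub>0\<close> has at most \<open>aki\<close> edges and,
  as \<open>(1 - p)\<^sup>4 \<le> p\<close> for \<open>p > p\<^sub>0 > 0.3\<close>, \<open>P(y\<^sub>0) \<ge> (1 - p)\<^bsup>(0.5 - 2a)ki\<^esup>\<close>.
\<close>

section \<open>Bernoulli weights and conditioning\<close>

definition bernoulli_weight :: "real \<Rightarrow> 'a set \<Rightarrow> 'a set \<Rightarrow> real" where
  "bernoulli_weight p W F = p ^ card F * (1 - p) ^ (card W - card F)"

definition determined_by :: "('a set \<Rightarrow> bool) \<Rightarrow> 'a set \<Rightarrow> bool" where
  "determined_by Ev W \<longleftrightarrow> (\<forall>E. Ev E = Ev (E \<inter> W))"

text \<open>The conditional probability of \<open>Ev\<close> given that, outside \<open>X\<close>, the random set is \<open>y\<close>.\<close>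

definition prob_given :: "real \<Rightarrow> 'a set \<Rightarrow> ('a set \<Rightarrow> bool) \<Rightarrow> 'a set \<Rightarrow> real" where
  "prob_given p X Ev y = (\<Sum>x\<in>Pow X. if Ev (y \<union> x) then bernoulli_weight p X x else 0)"

lemma bernoulli_weight_nonneg: "0 \<le> p \<Longrightarrow> p \<le> 1 \<Longrightarrow> 0 \<le> bernoulli_weight p W F"
  by (simp add: bernoulli_weight_def)

lemma bernoulli_weight_Un:
  assumes "finite W1" "finite W2" "W1 \<inter> W2 = {}" "F1 \<subseteq> W1" "F2 \<subseteq> W2"
  shows "bernoulli_weight p (W1 \<union> W2) (F1 \<union> F2) = bernoulli_weight p W1 F1 * bernoulli_weight p W2 F2"
proof -
  have F: "finite F1" "finite F2" "F1 \<inter> F2 = {}"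
    using assms(3-5) finite_subset[OF assms(4,1)] finite_subset[OF assms(5,2)] by blast+
  have "card F1 \<le> card W1" "card F2 \<le> card W2"
    using assms by (simp_all add: card_mono)
  then have "card W1 + card W2 - (card F1 + card F2) = (card W1 - card F1) + (card W2 - card F2)"
    by simp
  with F assms show ?thesis
    by (simp add: bernoulli_weight_def card_Un_disjoint power_add)
qed

lemma sum_Pow_Un:
  assumes "finite W1" "finite W2" "W1 \<inter> W2 = {}"
  shows "(\<Sum>F\<in>Pow (W1 \<union> W2). h F) = (\<Sum>F1\<in>Pow W1. \<Sum>F2\<in>Pow W2. h (F1 \<union> F2))"
proof -
  have "(\<Sum>(F1, F2)\<in>Pow W1 \<times> Pow W2. h (F1 \<union> F2)) = (\<Sum>F\<in>Pow (W1 \<union> W2). h F)"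
    by (rule sum.reindex_bij_witness[where i="\<lambda>F. (F \<inter> W1, F \<inter> W2)" and j="\<lambda>(F1, F2). F1 \<union> F2"])
       (use assms in auto)
  then show ?thesis
    by (simp add: sum.cartesian_product)
qed

lemma sum_bernoulli_weight:
  assumes "finite W"
  shows "(\<Sum>F\<in>Pow W. bernoulli_weight p W F) = 1"
  using assms
proof (induction W rule: finite_induct)
  case empty
  then show ?case by (simp add: bernoulli_weight_def)
next
  case (insert x W)
  have "Pow {x} = {{}, {x}}"
    by blast
  then have one: "(\<Sum>F\<in>Pow {x}. bernoulli_weight p {x} F) = 1"
    by (simp add: bernoulli_weight_def)
  have "(\<Sum>F\<in>Pow ({x} \<union> W). bernoulli_weight p ({x} \<union> W) F)
      = (\<Sum>F1\<in>Pow {x}. \<Sum>F2\<in>Pow W. bernoulli_weight p ({x} \<union> W) (F1 \<union> F2))"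
    by (rule sum_Pow_Un) (use insert.hyps in auto)
  also have "\<dots> = (\<Sum>F1\<in>Pow {x}. \<Sum>F2\<in>Pow W. bernoulli_weight p {x} F1 * bernoulli_weight p W F2)"
    using insert.hyps by (intro sum.cong refl bernoulli_weight_Un) auto
  also have "\<dots> = 1"
    by (simp add: sum_product[symmetric] one insert.IH)
  finally show ?case
    by simp
qed

lemma prob_given_nonneg: "0 \<le> p \<Longrightarrow> p \<le> 1 \<Longrightarrow> 0 \<le> prob_given p X Ev y"
  by (simp add: prob_given_def bernoulli_weight_nonneg sum_nonneg)

lemma prob_given_neq_0_obtains:
  assumes "prob_given p X Ev y \<noteq> 0"
  obtains x where "x \<subseteq> X" "Ev (y \<union> x)"
proof -
  obtain x where "x \<in> Pow X" "(if Ev (y \<union> x) then bernoulli_weight p X x else 0) \<noteq> 0"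
    using assms unfolding prob_given_def by (rule sum.not_neutral_contains_not_neutral)
  then show ?thesis
    using that by (auto split: if_split_asm)
qed

lemma prob_given_True: "finite X \<Longrightarrow> prob_given p X (\<lambda>_. True) y = 1"
  by (simp add: prob_given_def sum_bernoulli_weight)

lemma determined_by_mono:
  assumes "determined_by Ev W" "W \<subseteq> W'"
  shows "determined_by Ev W'"
proof -
  have "E \<inter> W' \<inter> W = E \<inter> W" for E
    using assms(2) by blast
  then show ?thesis
    using assms(1) unfolding determined_by_def by metis
qed

lemma determined_by_conj:
  "determined_by Ev W \<Longrightarrow> determined_by Ev' W \<Longrightarrow> determined_by (\<lambda>E. Ev E \<and> Ev' E) W"
  unfolding determined_by_def by blast

lemma sum_Pow_Un_eq_prob_given:
  assumes "finite X" "finite Y" "X \<inter> Y = {}"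
  shows "(\<Sum>E\<in>Pow (Y \<union> X). if Ev E then bernoulli_weight p (Y \<union> X) E else 0)
       = (\<Sum>y\<in>Pow Y. bernoulli_weight p Y y * prob_given p X Ev y)"
proof -
  have YX: "Y \<inter> X = {}"
    using assms(3) by blast
  have "(\<Sum>E\<in>Pow (Y \<union> X). if Ev E then bernoulli_weight p (Y \<union> X) E else 0)
      = (\<Sum>y\<in>Pow Y. \<Sum>x\<in>Pow X. if Ev (y \<union> x) then bernoulli_weight p (Y \<union> X) (y \<union> x) else 0)"
    by (rule sum_Pow_Un[OF assms(2,1) YX])
  also have "\<dots> = (\<Sum>y\<in>Pow Y. \<Sum>x\<in>Pow X.
      bernoulli_weight p Y y * (if Ev (y \<union> x) then bernoulli_weight p X x else 0))"
    using assms YX by (intro sum.cong refl) (simp add: bernoulli_weight_Un)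
  finally show ?thesis
    by (simp add: prob_given_def sum_distrib_left)
qed

lemma sum_bernoulli_weight_restrict:
  assumes "finite U" "W \<subseteq> U" "determined_by Ev W"
  shows "(\<Sum>E\<in>Pow U. if Ev E then bernoulli_weight p U E else 0)
       = (\<Sum>F\<in>Pow W. if Ev F then bernoulli_weight p W F else 0)"
proof -
  have fin: "finite W" "finite (U - W)" and U: "W \<union> (U - W) = U"
    using assms finite_subset by auto
  have indep: "Ev (F \<union> G) = Ev F" if "F \<subseteq> W" "G \<subseteq> U - W" for F G
  proof -
    have "(F \<union> G) \<inter> W = F \<inter> W"
      using that by blast
    then show ?thesis
      using assms(3) unfolding determined_by_def by metis
  qed
  have given: "prob_given p (U - W) Ev F = (if Ev F then 1 else 0)" if "F \<subseteq> W" for F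
  proof -
    have "prob_given p (U - W) Ev F = (\<Sum>G\<in>Pow (U - W). if Ev F then bernoulli_weight p (U - W) G else 0)"
      unfolding prob_given_def using indep[OF that] by (intro sum.cong) auto
    then show ?thesis
      using fin by (simp add: sum_bernoulli_weight)
  qed
  have "(\<Sum>E\<in>Pow U. if Ev E then bernoulli_weight p U E else 0)
      = (\<Sum>F\<in>Pow W. bernoulli_weight p W F * prob_given p (U - W) Ev F)"
    using sum_Pow_Un_eq_prob_given[OF fin(2,1), of Ev p] unfolding U by blast
  also have "\<dots> = (\<Sum>F\<in>Pow W. if Ev F then bernoulli_weight p W F else 0)"
    using given by (intro sum.cong) auto
  finally show ?thesis .
qed

lemma prob_given_conj:
  assumes "finite X" "finite Z" "X \<inter> Y = {}" "Y \<inter> Z = {}" "X \<inter> Z = {}"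
    and "determined_by Ev (Y \<union> X)" "determined_by Ev' (Y \<union> Z)"
  shows "prob_given p (X \<union> Z) (\<lambda>E. Ev E \<and> Ev' E) y = prob_given p X Ev y * prob_given p Z Ev' y"
proof -
  have local: "Ev (y \<union> (x \<union> z)) = Ev (y \<union> x)" "Ev' (y \<union> (x \<union> z)) = Ev' (y \<union> z)"
    if "x \<subseteq> X" "z \<subseteq> Z" for x z
  proof -
    have "(y \<union> (x \<union> z)) \<inter> (Y \<union> X) = (y \<union> x) \<inter> (Y \<union> X)"
      "(y \<union> (x \<union> z)) \<inter> (Y \<union> Z) = (y \<union> z) \<inter> (Y \<union> Z)"
      using that assms(3-5) by blast+
    then show "Ev (y \<union> (x \<union> z)) = Ev (y \<union> x)" "Ev' (y \<union> (x \<union> z)) = Ev' (y \<union> z)"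
      using assms(6,7) unfolding determined_by_def by metis+
  qed
  have "prob_given p (X \<union> Z) (\<lambda>E. Ev E \<and> Ev' E) y = (\<Sum>x\<in>Pow X. \<Sum>z\<in>Pow Z.
      (if Ev (y \<union> x) then bernoulli_weight p X x else 0) * (if Ev' (y \<union> z) then bernoulli_weight p Z z else 0))"
    unfolding prob_given_def sum_Pow_Un[OF assms(1,2,5)]
    using assms(1,2,5) by (intro sum.cong refl) (simp add: local bernoulli_weight_Un)
  then show ?thesis
    by (simp add: prob_given_def sum_product)
qed

section \<open>Edge sets of the random graph\<close>

definition edges_in :: "'a set \<Rightarrow> 'a set set" where
  "edges_in K = {e. e \<subseteq> K \<and> card e = 2}"

lemma all_edges_eq_edges_in: "all_edges n = edges_in {..<n}"
  by (auto simp: all_edges_def edges_in_def card_2_iff)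

lemma finite_edges_in: "finite K \<Longrightarrow> finite (edges_in K)"
  by (rule finite_subset[of _ "Pow K"]) (auto simp: edges_in_def)

lemma edges_in_mono: "K \<subseteq> L \<Longrightarrow> edges_in K \<subseteq> edges_in L"
  by (auto simp: edges_in_def)

lemma edges_in_Int: "edges_in (K \<inter> L) = edges_in K \<inter> edges_in L"
  by (auto simp: edges_in_def)

lemma card_edges_in: "finite K \<Longrightarrow> card (edges_in K) = card K choose 2"
  unfolding edges_in_def by (rule n_subsets)

lemma doubleton_in_edges_in: "x \<in> K \<Longrightarrow> y \<in> K \<Longrightarrow> x \<noteq> y \<Longrightarrow> {x, y} \<in> edges_in K"
  by (auto simp: edges_in_def)

lemma gnp_prob_eq_sum_Pow:
  "gnp_prob n p Ev = (\<Sum>E\<in>Pow (all_edges n). if Ev E then bernoulli_weight p (all_edges n) E else 0)"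
proof -
  have "finite (all_edges n)"
    by (simp add: all_edges_eq_edges_in finite_edges_in)
  moreover have "{E. E \<subseteq> all_edges n \<and> Ev E} = {E \<in> Pow (all_edges n). Ev E}"
    by blast
  ultimately show ?thesis
    unfolding gnp_prob_def bernoulli_weight_def by (simp add: sum.inter_filter[symmetric])
qed

lemma gnp_prob_restrict:
  assumes "K \<subseteq> {..<n}" "determined_by Ev (edges_in K)"
  shows "gnp_prob n p Ev = (\<Sum>F\<in>Pow (edges_in K). if Ev F then bernoulli_weight p (edges_in K) F else 0)"
  unfolding gnp_prob_eq_sum_Pow all_edges_eq_edges_in
  by (rule sum_bernoulli_weight_restrict) (use assms in \<open>auto simp: finite_edges_in edges_in_mono\<close>)

lemma gnp_prob_conj_eq:
  assumes "K \<subseteq> {..<n}" "K' \<subseteq> {..<n}"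
    and "determined_by Ev (edges_in K)" "determined_by Ev' (edges_in K')"
  shows "gnp_prob n p (\<lambda>E. Ev E \<and> Ev' E) =
    (\<Sum>y\<in>Pow (edges_in (K \<inter> K')). bernoulli_weight p (edges_in (K \<inter> K')) y
       * prob_given p (edges_in K - edges_in K') Ev y * prob_given p (edges_in K' - edges_in K) Ev' y)"
proof -
  define X Y Z where "X = edges_in K - edges_in K'" and "Y = edges_in (K \<inter> K')"
    and "Z = edges_in K' - edges_in K"
  have "finite K" "finite K'"
    using assms(1,2) finite_subset by blast+
  then have fin: "finite (edges_in K)" "finite (edges_in K')" "finite (edges_in (K \<inter> K'))"
    by (simp_all add: finite_edges_in)
  have YX: "Y \<union> X = edges_in K" and YZ: "Y \<union> Z = edges_in K'"
    unfolding X_def Y_def Z_def edges_in_Int by blast+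
  have W: "Y \<union> (X \<union> Z) = edges_in K \<union> edges_in K'"
    using YX YZ by blast
  have disj: "X \<inter> Y = {}" "Y \<inter> Z = {}" "X \<inter> Z = {}" "(X \<union> Z) \<inter> Y = {}"
    unfolding X_def Y_def Z_def edges_in_Int by blast+
  have "determined_by (\<lambda>E. Ev E \<and> Ev' E) (Y \<union> (X \<union> Z))"
    unfolding W using assms(3,4) by (blast intro: determined_by_conj determined_by_mono)
  moreover have "Y \<union> (X \<union> Z) \<subseteq> all_edges n"
    unfolding W all_edges_eq_edges_in using assms(1,2) edges_in_mono by blast
  ultimately have "gnp_prob n p (\<lambda>E. Ev E \<and> Ev' E) =
      (\<Sum>E\<in>Pow (Y \<union> (X \<union> Z)). if Ev E \<and> Ev' E then bernoulli_weight p (Y \<union> (X \<union> Z)) E else 0)"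
    unfolding gnp_prob_eq_sum_Pow
    by (intro sum_bernoulli_weight_restrict) (simp_all add: all_edges_eq_edges_in finite_edges_in)
  also have "\<dots> = (\<Sum>y\<in>Pow Y. bernoulli_weight p Y y * prob_given p (X \<union> Z) (\<lambda>E. Ev E \<and> Ev' E) y)"
    using fin disj unfolding X_def Y_def Z_def by (intro sum_Pow_Un_eq_prob_given) auto
  also have "\<dots> = (\<Sum>y\<in>Pow Y. bernoulli_weight p Y y * prob_given p X Ev y * prob_given p Z Ev' y)"
  proof -
    have "finite X" "finite Z"
      using fin unfolding X_def Z_def by simp_all
    moreover have "determined_by Ev (Y \<union> X)" "determined_by Ev' (Y \<union> Z)"
      using assms(3,4) unfolding YX YZ .
    ultimately show ?thesis
      using prob_given_conj[OF _ _ disj(1-3)] by (simp add: mult.assoc)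
  qed
  finally show ?thesis
    unfolding X_def Y_def Z_def .
qed

lemma gnp_prob_eq_sum_prob_given:
  assumes "K \<subseteq> {..<n}" "determined_by Ev (edges_in K)"
  shows "gnp_prob n p Ev = (\<Sum>y\<in>Pow (edges_in (K \<inter> L)). bernoulli_weight p (edges_in (K \<inter> L)) y
    * prob_given p (edges_in K - edges_in L) Ev y)"
proof -
  have "finite K"
    using assms(1) finite_subset by blast
  then have fin: "finite (edges_in (K \<inter> L) - edges_in K)"
    by (simp add: finite_edges_in)
  have True_determined: "determined_by (\<lambda>_. True) (edges_in (K \<inter> L))"
    by (simp add: determined_by_def)
  have "gnp_prob n p (\<lambda>E. Ev E \<and> True) =
    (\<Sum>y\<in>Pow (edges_in (K \<inter> L)). bernoulli_weight p (edges_in (K \<inter> L)) y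
       * prob_given p (edges_in K - edges_in (K \<inter> L)) Ev y * prob_given p (edges_in (K \<inter> L) - edges_in K) (\<lambda>_. True) y)"
    using gnp_prob_conj_eq[OF assms(1) _ assms(2) True_determined] assms(1) by (simp add: Int_absorb1 subset_iff)
  moreover have "edges_in K - edges_in (K \<inter> L) = edges_in K - edges_in L"
    by (auto simp: edges_in_Int)
  ultimately show ?thesis
    using prob_given_True[OF fin] by simp
qed

section \<open>Invariance of \<open>F\<^sub>k\<close>\<close>

lemma nbhd_subset: "nbhd E K S \<subseteq> K"
  by (auto simp: nbhd_def)

lemma nbhd_image:
  assumes inj: "inj_on h K" and "S \<subseteq> K"
    and edge: "\<And>x y. x \<in> K \<Longrightarrow> y \<in> K \<Longrightarrow> x \<noteq> y \<Longrightarrow> {h x, h y} \<in> E' \<longleftrightarrow> {x, y} \<in> E"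
  shows "nbhd E' (h ` K) (h ` S) = h ` nbhd E K S"
proof -
  have "{h u, h v} \<in> E' \<and> h u \<noteq> h v \<longleftrightarrow> {u, v} \<in> E \<and> u \<noteq> v" if "u \<in> K" "v \<in> S" for u v
    using that assms by (metis inj_on_eq_iff subsetD)
  then show ?thesis
    unfolding nbhd_def by (auto simp: image_iff)
qed

lemma card_sym_diff_image:
  assumes "inj_on h K" "X \<subseteq> K" "Y \<subseteq> K"
  shows "card ((h ` X - h ` Y) \<union> (h ` Y - h ` X)) = card ((X - Y) \<union> (Y - X))"
proof -
  have "h ` (X - Y) = h ` X - h ` Y" "h ` (Y - X) = h ` Y - h ` X"
    by (intro inj_on_image_set_diff[OF assms(1)]; use assms in blast)+
  then have "(h ` X - h ` Y) \<union> (h ` Y - h ` X) = h ` ((X - Y) \<union> (Y - X))"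
    by (simp add: image_Un)
  moreover have "inj_on h ((X - Y) \<union> (Y - X))"
    using assms by (blast intro: inj_on_subset)
  ultimately show ?thesis
    by (simp add: card_image)
qed

lemma image_pair_partition:
  assumes inj: "inj_on h K" and "A \<subseteq> K" and P: "\<forall>S\<in>P. S \<subseteq> A \<and> card S = 2"
    "\<forall>S\<in>P. \<forall>T\<in>P. S \<noteq> T \<longrightarrow> S \<inter> T = {}"
  shows "card ((`) h ` P) = card P" "\<forall>S\<in>(`) h ` P. S \<subseteq> h ` A \<and> card S = 2"
    "\<forall>S\<in>(`) h ` P. \<forall>T\<in>(`) h ` P. S \<noteq> T \<longrightarrow> S \<inter> T = {}"
proof -
  have PK: "S \<in> P \<Longrightarrow> S \<subseteq> K" for S
    using assms(2) P(1) by blast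
  then show "card ((`) h ` P) = card P"
    using inj_on_subset[OF inj_on_image_Pow[OF inj]] by (blast intro: card_image)
  show "\<forall>S\<in>(`) h ` P. S \<subseteq> h ` A \<and> card S = 2"
    using P(1) PK inj by (auto simp: card_image inj_on_subset)
  show "\<forall>S\<in>(`) h ` P. \<forall>T\<in>(`) h ` P. S \<noteq> T \<longrightarrow> S \<inter> T = {}"
  proof (intro ballI impI)
    fix S' T' assume "S' \<in> (`) h ` P" "T' \<in> (`) h ` P" "S' \<noteq> T'"
    then obtain S T where ST: "S \<in> P" "T \<in> P" "S \<noteq> T" and "S' = h ` S" "T' = h ` T"
      by blast
    then show "S' \<inter> T' = {}"
      using P(2) inj_on_image_Int[OF inj PK[OF ST(1)] PK[OF ST(2)]] by simp
  qed
qed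

lemma in_F_transport:
  assumes h: "bij_betw h K K'"
    and edge: "\<And>x y. x \<in> K \<Longrightarrow> y \<in> K \<Longrightarrow> x \<noteq> y \<Longrightarrow> {h x, h y} \<in> E' \<longleftrightarrow> {x, y} \<in> E"
    and "in_F a k E K"
  shows "in_F a k E' K'"
proof -
  have inj: "inj_on h K" and K': "K' = h ` K"
    using h by (auto simp: bij_betw_def)
  obtain A P where A: "A \<subseteq> K" "real (card A) = a * real k" "real (card (K - A)) = (1 - a) * real k"
    and P: "real (card P) = a * real k / 2" "\<forall>S\<in>P. S \<subseteq> A \<and> card S = 2" "\<Union>P = A"
      "\<forall>S\<in>P. \<forall>T\<in>P. S \<noteq> T \<longrightarrow> S \<inter> T = {}"
    and bipartite: "\<forall>x\<in>K. \<forall>y\<in>K. {x, y} \<in> E \<and> x \<noteq> y \<longrightarrow>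
      (x \<in> A \<and> y \<in> K - A) \<or> (x \<in> K - A \<and> y \<in> A)"
    and blowup: "\<forall>S\<in>P. \<forall>\<beta>\<in>K - A. (\<forall>x\<in>S. {x, \<beta>} \<in> E) \<or> (\<forall>x\<in>S. {x, \<beta>} \<notin> E)"
    and degree: "\<forall>v\<in>A. real (card (nbhd E K {v})) \<ge> 0.15 * real k"
    and separated: "\<forall>S\<in>P. \<forall>T\<in>P. S \<noteq> T \<longrightarrow>
      real (card ((nbhd E K S - nbhd E K T) \<union> (nbhd E K T - nbhd E K S))) \<ge> 0.25 * real k"
    using assms(3) unfolding in_F_def by (elim exE conjE) (rule that)
  have PK: "S \<in> P \<Longrightarrow> S \<subseteq> K" for S
    using A(1) P(2) by blast
  have card_image_h: "B \<subseteq> K \<Longrightarrow> card (h ` B) = card B" for B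
    using inj by (meson card_image inj_on_subset)
  have nbhd_h: "S \<subseteq> K \<Longrightarrow> nbhd E' K' (h ` S) = h ` nbhd E K S" for S
    unfolding K' using nbhd_image[OF inj _ edge] .
  have KA: "K' - h ` A = h ` (K - A)"
    unfolding K' using inj_on_image_set_diff[OF inj _ A(1)] by blast
  note P' = image_pair_partition[OF inj A(1) P(2,4)]
  have "\<forall>x\<in>K'. \<forall>y\<in>K'. {x, y} \<in> E' \<and> x \<noteq> y \<longrightarrow>
      (x \<in> h ` A \<and> y \<in> K' - h ` A) \<or> (x \<in> K' - h ` A \<and> y \<in> h ` A)"
    unfolding KA
  proof (intro ballI impI)
    fix x' y' assume "x' \<in> K'" "y' \<in> K'" and e': "{x', y'} \<in> E' \<and> x' \<noteq> y'"
    then obtain x y where xy: "x \<in> K" "y \<in> K" "x' = h x" "y' = h y"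
      unfolding K' by blast
    then have "{x, y} \<in> E \<and> x \<noteq> y"
      using e' edge by auto
    then have "(x \<in> A \<and> y \<in> K - A) \<or> (x \<in> K - A \<and> y \<in> A)"
      using bipartite xy(1,2) by blast
    then show "(x' \<in> h ` A \<and> y' \<in> h ` (K - A)) \<or> (x' \<in> h ` (K - A) \<and> y' \<in> h ` A)"
      using xy by blast
  qed
  moreover have "\<forall>S\<in>(`) h ` P. \<forall>\<beta>\<in>K' - h ` A. (\<forall>x\<in>S. {x, \<beta>} \<in> E') \<or> (\<forall>x\<in>S. {x, \<beta>} \<notin> E')"
    unfolding KA
  proof (intro ballI)
    fix S' \<beta>' assume "S' \<in> (`) h ` P" "\<beta>' \<in> h ` (K - A)"
    then obtain S \<beta> where S: "S \<in> P" "S' = h ` S" and \<beta>: "\<beta> \<in> K - A" "\<beta>' = h \<beta>"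
      by blast
    have "\<forall>x\<in>S. {h x, h \<beta>} \<in> E' \<longleftrightarrow> {x, \<beta>} \<in> E"
      using edge P(2) S(1) \<beta>(1) A(1) by blast
    then show "(\<forall>x\<in>S'. {x, \<beta>'} \<in> E') \<or> (\<forall>x\<in>S'. {x, \<beta>'} \<notin> E')"
      using blowup S \<beta> by auto
  qed
  moreover have "\<forall>v\<in>h ` A. real (card (nbhd E' K' {v})) \<ge> 0.15 * real k"
    using degree A(1) nbhd_h[of "{_}"] card_image_h[OF nbhd_subset] by auto
  moreover have "\<forall>S\<in>(`) h ` P. \<forall>T\<in>(`) h ` P. S \<noteq> T \<longrightarrow>
      real (card ((nbhd E' K' S - nbhd E' K' T) \<union> (nbhd E' K' T - nbhd E' K' S))) \<ge> 0.25 * real k"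
  proof (intro ballI impI)
    fix S' T' assume "S' \<in> (`) h ` P" "T' \<in> (`) h ` P" "S' \<noteq> T'"
    then obtain S T where ST: "S \<in> P" "T \<in> P" "S \<noteq> T" and S': "S' = h ` S" and T': "T' = h ` T"
      by blast
    then show "real (card ((nbhd E' K' S' - nbhd E' K' T') \<union> (nbhd E' K' T' - nbhd E' K' S'))) \<ge> 0.25 * real k"
      using separated card_sym_diff_image[OF inj nbhd_subset nbhd_subset]
      by (simp add: nbhd_h[OF PK[OF ST(1)]] nbhd_h[OF PK[OF ST(2)]])
  qed
  moreover have "h ` A \<subseteq> K'"
    unfolding K' using A(1) by blast
  moreover have "real (card (h ` A)) = a * real k" "real (card (K' - h ` A)) = (1 - a) * real k"
    using A by (simp_all add: KA card_image_h)
  moreover have "real (card ((`) h ` P)) = a * real k / 2" "\<Union>((`) h ` P) = h ` A"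
    using P(1,3) P'(1) by auto
  ultimately show ?thesis
    using P'(2,3)
    unfolding in_F_def by (intro exI[of _ "h ` A"] exI[of _ "(`) h ` P"] conjI) assumption+
qed

lemma in_F_determined_by: "determined_by (\<lambda>E. in_F a k E K) (edges_in K)"
  unfolding determined_by_def
proof
  fix E
  show "in_F a k E K = in_F a k (E \<inter> edges_in K) K"
    by (rule iffI; erule in_F_transport[OF bij_betw_id, rotated]) (auto simp: doubleton_in_edges_in)
qed

lemma bij_betw_edges_in:
  assumes h: "bij_betw h K K'"
  shows "bij_betw ((`) h) (edges_in K) (edges_in K')"
proof (rule bij_betw_subset[OF bij_betw_image_Pow[OF h]])
  show "edges_in K \<subseteq> Pow K"
    by (auto simp: edges_in_def)
  have card_h: "e \<subseteq> K \<Longrightarrow> card (h ` e) = card e" for e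
    using h by (meson bij_betw_def card_image inj_on_subset)
  have Pow_K': "Pow K' = (`) h ` Pow K"
    using bij_betw_imp_surj_on[OF bij_betw_image_Pow[OF h]] by simp
  show "(`) h ` edges_in K = edges_in K'"
  proof
    show "(`) h ` edges_in K \<subseteq> edges_in K'"
      using card_h h by (auto simp: edges_in_def bij_betw_def)
    show "edges_in K' \<subseteq> (`) h ` edges_in K"
    proof
      fix e' assume "e' \<in> edges_in K'"
      then have "e' \<in> (`) h ` Pow K" "card e' = 2"
        unfolding Pow_K'[symmetric] by (auto simp: edges_in_def)
      then obtain e where "e \<subseteq> K" "e' = h ` e" "card e' = 2"
        by blast
      then show "e' \<in> (`) h ` edges_in K"
        using card_h by (auto simp: edges_in_def)
    qed
  qed
qed

lemma in_F_image_iff: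
  assumes h: "bij_betw h K K'" and "F \<subseteq> Pow K"
  shows "in_F a k ((`) h ` F) K' \<longleftrightarrow> in_F a k F K"
proof -
  have edge: "{h x, h y} \<in> (`) h ` F \<longleftrightarrow> {x, y} \<in> F" if "x \<in> K" "y \<in> K" for x y
    using inj_on_image_mem_iff[OF inj_on_image_Pow[OF bij_betw_imp_inj_on[OF h]] _ assms(2), of "{x, y}"] that
    by simp
  have inv: "bij_betw (inv_into K h) K' K"
    by (rule bij_betw_inv_into[OF h])
  have edge_inv: "{inv_into K h x', inv_into K h y'} \<in> F \<longleftrightarrow> {x', y'} \<in> (`) h ` F"
    if "x' \<in> K'" "y' \<in> K'" for x' y'
    using edge[of "inv_into K h x'" "inv_into K h y'"] that h
    by (simp add: bij_betw_inv_into_right bij_betw_apply[OF inv])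
  show ?thesis
    using in_F_transport[OF h edge] in_F_transport[OF inv edge_inv] by blast
qed

lemma gnp_prob_in_F_card_eq:
  assumes "K \<subseteq> {..<n}" "K' \<subseteq> {..<n}" "card K = card K'"
  shows "gnp_prob n p (\<lambda>E. in_F a k E K) = gnp_prob n p (\<lambda>E. in_F a k E K')"
proof -
  have fin: "finite K" "finite K'"
    using assms(1,2) finite_subset by blast+
  obtain h where h: "bij_betw h K K'"
    using finite_same_card_bij[OF fin assms(3)] by blast
  have bij: "bij_betw ((`) ((`) h)) (Pow (edges_in K)) (Pow (edges_in K'))"
    using bij_betw_image_Pow[OF bij_betw_edges_in[OF h]] .
  have "card (edges_in K') = card (edges_in K)"
    using fin assms(3) by (simp add: card_edges_in)
  moreover have "card ((`) h ` F) = card F" if "F \<subseteq> edges_in K" for F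
    using that bij_betw_edges_in[OF h] by (meson bij_betw_imp_inj_on card_image inj_on_subset)
  moreover have "in_F a k ((`) h ` F) K' \<longleftrightarrow> in_F a k F K" if "F \<subseteq> edges_in K" for F
  proof -
    have "F \<subseteq> Pow K"
      using that by (auto simp: edges_in_def)
    then show ?thesis
      by (rule in_F_image_iff[OF h])
  qed
  ultimately have "(\<Sum>F\<in>Pow (edges_in K). if in_F a k F K then bernoulli_weight p (edges_in K) F else 0)
      = (\<Sum>F\<in>Pow (edges_in K). if in_F a k ((`) h ` F) K'
        then bernoulli_weight p (edges_in K') ((`) h ` F) else 0)"
    by (intro sum.cong refl) (simp add: bernoulli_weight_def)
  also have "\<dots> = (\<Sum>G\<in>Pow (edges_in K'). if in_F a k G K' then bernoulli_weight p (edges_in K') G else 0)"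
    by (rule sum.reindex_bij_betw[OF bij])
  finally show ?thesis
    by (simp add: gnp_prob_restrict[OF assms(1) in_F_determined_by] gnp_prob_restrict[OF assms(2) in_F_determined_by])
qed

lemma card_Int_edges_in_le:
  assumes "in_F a k E K" "I \<subseteq> K" "finite K"
  shows "real (card (E \<inter> edges_in I)) \<le> a * real k * real (card I)"
proof -
  obtain A where A: "A \<subseteq> K" "real (card A) = a * real k"
    and bipartite: "\<forall>x\<in>K. \<forall>y\<in>K. {x, y} \<in> E \<and> x \<noteq> y \<longrightarrow>
      (x \<in> A \<and> y \<in> K - A) \<or> (x \<in> K - A \<and> y \<in> A)"
    using assms(1) unfolding in_F_def by (elim exE conjE) (rule that)
  have "E \<inter> edges_in I \<subseteq> (\<lambda>(u, v). {u, v}) ` (A \<times> I)"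
  proof
    fix e assume "e \<in> E \<inter> edges_in I"
    then obtain u v where e: "e = {u, v}" "u \<noteq> v" "u \<in> I" "v \<in> I" "{u, v} \<in> E"
      by (auto simp: edges_in_def card_2_iff)
    then have "(u \<in> A \<and> v \<in> I) \<or> (v \<in> A \<and> u \<in> I)"
      using bipartite assms(2) by blast
    then show "e \<in> (\<lambda>(u, v). {u, v}) ` (A \<times> I)"
      using e(1) by (auto simp: image_iff insert_commute)
  qed
  moreover have "finite A" "finite I"
    using A(1) assms(2,3) finite_subset by blast+
  ultimately have "card (E \<inter> edges_in I) \<le> card ((\<lambda>(u, v). {u, v}) ` (A \<times> I))"
    by (intro card_mono) auto
  also have "\<dots> \<le> card A * card I"
    by (metis card_cartesian_product card_image_le finite_cartesian_product \<open>finite A\<close> \<open>finite I\<close>)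
  finally have "card (E \<inter> edges_in I) \<le> card A * card I" .
  then show ?thesis
    using A(2) by (metis of_nat_le_iff of_nat_mult)
qed

section \<open>Numerical estimates\<close>

lemma cubic_root_gt_three_tenths:
  fixes x :: real
  assumes "4 * x ^ 3 - 7 * x ^ 2 + 5 * x - 1 = 0"
  shows "3 / 10 < x"
proof -
  txt \<open>Dividing the cubic by \<open>x - 3/10\<close> leaves the remainder \<open>-11/500\<close>, and the
    quotient \<open>Q\<close> has no real root.\<close>
  define Q where "Q = 4 * x ^ 2 - 29 / 5 * x + 163 / 50"
  have "Q = 4 * (x - 29 / 40) ^ 2 + 463 / 400"
    unfolding Q_def by (simp add: power2_eq_square field_simps)
  moreover have "0 \<le> (x - 29 / 40) ^ 2"
    by simp
  ultimately have "0 < Q"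
    by linarith
  moreover have "(x - 3 / 10) * Q = 11 / 500"
    using assms unfolding Q_def by (simp add: power2_eq_square power3_eq_cube field_simps)
  then have "0 < (x - 3 / 10) * Q"
    by simp
  ultimately show ?thesis
    by (simp add: zero_less_mult_iff)
qed

lemma one_minus_power4_le:
  fixes p :: real
  assumes "3 / 10 < p" "p \<le> 1"
  shows "(1 - p) ^ 4 \<le> p"
proof -
  have "(1 - p) ^ 4 \<le> (7 / 10) ^ 4"
    using assms by (intro power_mono) auto
  then show ?thesis
    using assms(1) by (simp add: power_numeral_reduce)
qed

lemma bernoulli_weight_edges_in_lower_bound:
  fixes p a :: real and k :: nat
  assumes p: "0 < p" "p < 1" "(1 - p) ^ 4 \<le> p"
    and I: "finite I" "real (card I) \<le> (1 - 10 * a) * real k"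
    and F: "F \<subseteq> edges_in I" "real (card F) \<le> a * real k * real (card I)"
  shows "(1 - p) powr ((0.5 - 2 * a) * real k * real (card I)) \<le> bernoulli_weight p (edges_in I) F"
proof -
  define e N c where "e = card F" and "N = card (edges_in I)"
    and "c = (0.5 - 2 * a) * real k * real (card I)"
  have "e \<le> N"
    unfolding e_def N_def using F(1) I(1) by (simp add: card_mono finite_edges_in)
  txt \<open>\<open>(1 - p)\<^sup>4 \<le> p\<close> turns \<open>p\<^sup>e\<close> into \<open>(1 - p)\<^bsup>4e\<^esup>\<close>, and
    \<open>N + 3e \<le> i\<^sup>2/2 + 3aki \<le> (0.5 - 2a)ki\<close>.\<close>
  have "2 * N \<le> card I * (card I - 1)"
    unfolding N_def card_edges_in[OF I(1)] choose_two by simp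
  also have "\<dots> \<le> card I * card I"
    by simp
  finally have "2 * N \<le> card I * card I" .
  then have "real (2 * N) \<le> real (card I * card I)"
    by (rule of_nat_mono)
  moreover have "real (card I) * real (card I) \<le> (1 - 10 * a) * real k * real (card I)"
    by (rule mult_right_mono[OF I(2)]) simp
  moreover have "c = (1 - 10 * a) * real k * real (card I) / 2 + 3 * (a * real k * real (card I))"
    unfolding c_def by (simp add: field_simps)
  ultimately have "real (N + 3 * e) \<le> c"
    using F(2) unfolding e_def by simp
  then have "(1 - p) powr c \<le> (1 - p) powr real (N + 3 * e)"
    using p by (intro powr_mono') auto
  also have "\<dots> = (1 - p) ^ (N + 3 * e)"
    using p by (intro powr_realpow) simp
  also have "\<dots> = (1 - p) ^ (4 * e + (N - e))"
    using \<open>e \<le> N\<close> by (simp add: add.commute)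
  also have "\<dots> = ((1 - p) ^ 4) ^ e * (1 - p) ^ (N - e)"
    by (simp add: power_add power_mult)
  also have "\<dots> \<le> p ^ e * (1 - p) ^ (N - e)"
    using p by (intro mult_right_mono power_mono) auto
  finally show ?thesis
    unfolding bernoulli_weight_def e_def N_def c_def .
qed

lemma bernoulli_weight_trace_in_F_ge:
  fixes p a :: real
  assumes p: "0 < p" "p < 1" "(1 - p) ^ 4 \<le> p"
    and "in_F a k E K" "finite K" "I \<subseteq> K" "real (card I) \<le> (1 - 10 * a) * real k"
  shows "(1 - p) powr ((0.5 - 2 * a) * real k * real (card I))
    \<le> bernoulli_weight p (edges_in I) (E \<inter> edges_in I)"
proof (rule bernoulli_weight_edges_in_lower_bound[OF p _ assms(7)])
  show "finite I"
    using assms(5,6) finite_subset by blast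
qed (use card_Int_edges_in_le[OF assms(4,6,5)] in auto)

lemma weighted_sum_product_le:
  fixes w f g :: "'a \<Rightarrow> real"
  assumes "finite S" and nonneg: "\<And>y. y \<in> S \<Longrightarrow> 0 \<le> w y \<and> 0 \<le> f y \<and> 0 \<le> g y"
    and "0 \<le> c" and heavy: "\<And>y. y \<in> S \<Longrightarrow> g y \<noteq> 0 \<Longrightarrow> c \<le> w y"
  shows "c * (\<Sum>y\<in>S. w y * f y * g y) \<le> (\<Sum>y\<in>S. w y * f y) * (\<Sum>y\<in>S. w y * g y)"
proof (cases "S = {}")
  case True
  then show ?thesis
    by simp
next
  case False
  have "Max (g ` S) \<in> g ` S"
    using assms(1) False by simp
  then obtain y0 where y0: "y0 \<in> S" "g y0 = Max (g ` S)"
    by auto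
  then have max: "y \<in> S \<Longrightarrow> g y \<le> g y0" for y
    using assms(1) by simp
  have "(\<Sum>y\<in>S. w y * f y * g y) \<le> (\<Sum>y\<in>S. w y * f y) * g y0"
    unfolding sum_distrib_right using nonneg max by (intro sum_mono mult_left_mono) auto
  then have "c * (\<Sum>y\<in>S. w y * f y * g y) \<le> c * ((\<Sum>y\<in>S. w y * f y) * g y0)"
    using \<open>0 \<le> c\<close> by (rule mult_left_mono)
  also have "\<dots> = (\<Sum>y\<in>S. w y * f y) * (c * g y0)"
    by (simp add: ac_simps)
  also have "\<dots> \<le> (\<Sum>y\<in>S. w y * f y) * (w y0 * g y0)"
  proof -
    have "c * g y0 \<le> w y0 * g y0"
      using heavy[OF y0(1)] nonneg[OF y0(1)] by (cases "g y0 = 0") (auto intro: mult_right_mono)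
    then show ?thesis
      using nonneg by (intro mult_left_mono sum_nonneg) auto
  qed
  also have "\<dots> \<le> (\<Sum>y\<in>S. w y * f y) * (\<Sum>y\<in>S. w y * g y)"
    using nonneg y0(1) assms(1) by (intro mult_left_mono member_le_sum sum_nonneg) auto
  finally show ?thesis .
qed

lemma gnp_prob_conj_le:
  assumes "K \<subseteq> {..<n}" "K' \<subseteq> {..<n}" "0 \<le> p" "p \<le> 1" "0 \<le> c"
    and "determined_by Ev (edges_in K)" "determined_by Ev' (edges_in K')"
    and "gnp_prob n p Ev' = gnp_prob n p Ev"
    and heavy: "\<And>y. y \<subseteq> edges_in (K \<inter> K') \<Longrightarrow> prob_given p (edges_in K' - edges_in K) Ev' y \<noteq> 0
      \<Longrightarrow> c \<le> bernoulli_weight p (edges_in (K \<inter> K')) y"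
  shows "c * gnp_prob n p (\<lambda>E. Ev E \<and> Ev' E) \<le> (gnp_prob n p Ev) ^ 2"
proof -
  define Y w f g where "Y = edges_in (K \<inter> K')" and "w = bernoulli_weight p Y"
    and "f = prob_given p (edges_in K - edges_in K') Ev"
    and "g = prob_given p (edges_in K' - edges_in K) Ev'"
  have "finite K"
    using assms(1) finite_subset by blast
  then have "c * (\<Sum>y\<in>Pow Y. w y * f y * g y) \<le> (\<Sum>y\<in>Pow Y. w y * f y) * (\<Sum>y\<in>Pow Y. w y * g y)"
    using assms(3-5) heavy
    by (intro weighted_sum_product_le)
      (auto simp: w_def f_def g_def Y_def finite_edges_in bernoulli_weight_nonneg prob_given_nonneg)
  moreover have "gnp_prob n p Ev = (\<Sum>y\<in>Pow Y. w y * f y)"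
    unfolding Y_def w_def f_def by (rule gnp_prob_eq_sum_prob_given[OF assms(1,6)])
  moreover have "gnp_prob n p Ev' = (\<Sum>y\<in>Pow Y. w y * g y)"
    using gnp_prob_eq_sum_prob_given[OF assms(2,7), of p K] unfolding Y_def w_def g_def
    by (simp add: Int_commute)
  ultimately show ?thesis
    using gnp_prob_conj_eq[OF assms(1,2,6,7), of p] assms(8)
    unfolding Y_def w_def f_def g_def by (simp add: power2_eq_square)
qed

theorem mainTheorem13:
  fixes p p0 a :: real and k n :: nat and K K' :: "nat set"
  assumes p0_root: "4 * p0 ^ 3 - 7 * p0 ^ 2 + 5 * p0 - 1 = 0"
    and p_range: "p0 < p" "p < 1 / 2"
    and a_range: "0 < a" "a < 0.01"
    and ak_even: "\<exists>m :: int. a * real k = 2 * real_of_int m"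
    and K: "K \<subseteq> {..<n}" "card K = k"
    and K': "K' \<subseteq> {..<n}" "card K' = k"
    and i_bound: "real (card (K \<inter> K')) \<le> (1 - 10 * a) * real k"
  shows "gnp_prob n p (\<lambda>E. in_F a k E K \<and> in_F a k E K')
           \<le> (1 - p) powr (- (0.5 - 2 * a) * real k * real (card (K \<inter> K')))
              * (gnp_prob n p (\<lambda>E. in_F a k E K)) ^ 2"
proof -
  have p: "0 < p" "p < 1" "(1 - p) ^ 4 \<le> p"
    using cubic_root_gt_three_tenths[OF p0_root] p_range one_minus_power4_le by auto
  have fin: "finite K'"
    using K'(1) finite_subset by blast
  define c where "c = (1 - p) powr ((0.5 - 2 * a) * real k * real (card (K \<inter> K')))"
  have "c * gnp_prob n p (\<lambda>E. in_F a k E K \<and> in_F a k E K') \<le> (gnp_prob n p (\<lambda>E. in_F a k E K)) ^ 2"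
  proof (rule gnp_prob_conj_le[OF K(1) K'(1) _ _ _ in_F_determined_by in_F_determined_by])
    show "gnp_prob n p (\<lambda>E. in_F a k E K') = gnp_prob n p (\<lambda>E. in_F a k E K)"
      using gnp_prob_in_F_card_eq[OF K'(1) K(1)] K(2) K'(2) by simp
  next
    fix y assume y: "y \<subseteq> edges_in (K \<inter> K')"
      and "prob_given p (edges_in K' - edges_in K) (\<lambda>E. in_F a k E K') y \<noteq> 0"
    from this(2) obtain z where z: "z \<subseteq> edges_in K' - edges_in K" "in_F a k (y \<union> z) K'"
      by (rule prob_given_neq_0_obtains)
    then have "y = (y \<union> z) \<inter> edges_in (K \<inter> K')"
      using y unfolding edges_in_Int by blast
    then show "c \<le> bernoulli_weight p (edges_in (K \<inter> K')) y"
      using bernoulli_weight_trace_in_F_ge[OF p z(2) fin _ i_bound] unfolding c_def by simp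
  qed (use p in \<open>auto simp: c_def\<close>)
  then show ?thesis
    using p unfolding c_def by (simp add: powr_minus field_simps)
qed

end
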